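(* Let $\omega\colon\mathbf Z_+\to(0,+\infty)$ be a positive weight, let $\mu\in\mathbf C\setminus\{0\}$ and let $f(z)=\sum_{k\ge3}c_kz^k\in\mathcal X_\omega$ be such that for every $m\ge1$ and every $n\ge0$, \[\frac{\mu^{-1}c_{(3m+2)2^n}}{\omega((3m+2)2^n)}=\frac{c_{(2m+1)2^n}}{\omega((2m+1)2^n)}\quad\text{and}\quad c_{2^{n+2}}=0.\] Then for every $k\ge3$ with $k\notin\{2^i;\ i\ge2\}$ there exist integer sequences $(m_n)_{n\ge1}$, $(p_n)_{n\ge1}$, $(j_n)_{n\ge1}$ such that: (i) $c_k=\big(\mu^{-n}\omega((2m_1+1)2^{p_1})/\omega((3m_n+2)2^{p_n})\big)\,c_{(3m_n+2)2^{p_n}}$ for every $n\ge1$; (ii) $m_n\ge1$ for every $n\ge1$; (iii) $3m_n+2=T^{j_n}(k)$ for every $n\ge1$; (iv) for every $n\ge1$, $j_{n+1}>j_n$ if and only if $3m_n+2\notin\{2^i;\ i\ge2\}$; (v) $(j_n)_{n\ge1}$ and $((3m_n+2)2^{p_n})_{n\ge1}$ are either both strictly increasing or both stationary.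
   Context: $T\colon\mathbf Z_+\to\mathbf Z_+$ is the modified Collatz map: $T(n)=n/2$ for $n$ even, $T(n)=(3n+1)/2$ for $n$ odd. $\mathcal X_\omega$ is the Hilbert space of holomorphic functions $f(z)=\sum_{n\ge3}c_nz^n$ on the unit disk with $\|f\|_\omega^2=\sum_{n\ge3}|c_n|^2/\omega(n)<\infty$. *)

theory Defs
  imports "HOL-Analysis.Analysis"
begin

definition collatzT :: "nat \<Rightarrow> nat" where
  "collatzT n = (if even n then n div 2 else (3 * n + 1) div 2)"

definition pow2_ge4 :: "nat set" where
  "pow2_ge4 = {2 ^ i | i. i \<ge> 2}"

definition X_omega :: "(nat \<Rightarrow> real) \<Rightarrow> (complex \<Rightarrow> complex) set" where
  "X_omega \<omega> = {f. \<exists>c :: nat \<Rightarrow> complex.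
      (\<forall>n<3. c n = 0) \<and>
      summable (\<lambda>n. (cmod (c (n + 3)))\<^sup>2 / \<omega> (n + 3)) \<and>
      (\<forall>z\<in>ball 0 1. (\<lambda>n. c n * z ^ n) sums f z)}"

definition stationary :: "(nat \<Rightarrow> nat) \<Rightarrow> bool" where
  "stationary s \<longleftrightarrow> (\<exists>N. \<forall>n\<ge>N. s n = s N)"

end

theory Submission
  imports Defs
begin

(* Write k = (2m + 1) 2^p with m >= 1, so that T^(p+1)(k) = 3m + 2. The hypothesis says that
   c/omega at k is mu^-1 times c/omega at the larger index (3m + 2) 2^p. Splitting
   3m + 2 = (2m' + 1) 2^v in the same way and repeating gives a chain of strictly increasing
   indices (3m_n + 2) 2^(p_n), with 3m_n + 2 a Collatz iterate of k and one factor mu^-1 per step.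
   The chain stops when 3m_n + 2 is a power of two; it is constant from then on, and c_k = 0
   because the coefficient at that power of two vanishes. *)

definition odd_pow2_split :: "nat \<Rightarrow> nat \<times> nat" where
  "odd_pow2_split k = (k div 2 ^ multiplicity 2 k div 2, multiplicity 2 k)"

lemma odd_pow2_split_eq:
  assumes "k > 0" "odd_pow2_split k = (m, p)"
  shows "k = (2 * m + 1) * 2 ^ p"
proof -
  have "odd (k div 2 ^ p)"
    using multiplicity_decompose[of k 2] assms by (auto simp: odd_pow2_split_def)
  then have "k div 2 ^ p = 2 * m + 1"
    using assms(2) by (auto simp: odd_pow2_split_def)
  moreover have "2 ^ p dvd k"
    using multiplicity_dvd[of 2 k] assms(2) by (simp add: odd_pow2_split_def)
  ultimately show ?thesis by (metis dvd_div_mult_self)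
qed

lemma odd_pow2_split_ge1:
  assumes "k \<ge> 3" "k \<notin> pow2_ge4" "odd_pow2_split k = (m, p)"
  shows "m \<ge> 1"
proof (rule ccontr)
  assume "\<not> m \<ge> 1"
  then have "k = 2 ^ p" using odd_pow2_split_eq[OF _ assms(3)] assms(1) by simp
  moreover from this have "p \<ge> 2"
    using assms(1) by (cases "p \<le> 1") (auto simp: le_Suc_eq)
  ultimately show False using assms(2) by (auto simp: pow2_ge4_def)
qed

lemma collatzT_funpow_mult_pow2: "(collatzT ^^ p) (x * 2 ^ p) = x"
proof (induction p)
  case (Suc p)
  have "collatzT (x * 2 ^ Suc p) = x * 2 ^ p" by (simp add: collatzT_def)
  then show ?case using Suc by (simp add: funpow_Suc_right del: funpow.simps)
qed simp

lemma collatzT_funpow_odd_mult_pow2: "(collatzT ^^ Suc p) ((2 * m + 1) * 2 ^ p) = 3 * m + 2"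
  by (simp only: funpow.simps comp_apply collatzT_funpow_mult_pow2) (simp add: collatzT_def)

lemma strict_mono_or_stationaryI:
  fixes f g :: "nat \<Rightarrow> nat"
  assumes advance: "\<And>n. \<not> P n \<Longrightarrow> f n < f (Suc n) \<and> g n < g (Suc n)"
    and trap: "\<And>n. P n \<Longrightarrow> P (Suc n) \<and> f (Suc n) = f n \<and> g (Suc n) = g n"
  shows "(strict_mono f \<and> strict_mono g) \<or> (stationary f \<and> stationary g)"
proof (cases "\<exists>N. P N")
  case True
  then obtain N where "P N" ..
  have "P (N + d) \<and> f (N + d) = f N \<and> g (N + d) = g N" for d
    by (induction d) (use \<open>P N\<close> trap in auto)
  then have "\<forall>n\<ge>N. f n = f N \<and> g n = g N"
    by (metis le_add_diff_inverse)
  then show ?thesis unfolding stationary_def by blast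
next
  case False
  then show ?thesis using advance by (simp add: strict_mono_Suc_iff)
qed

lemma strict_mono_on_shift:
  fixes f :: "nat \<Rightarrow> 'a :: order"
  assumes "strict_mono f"
  shows "strict_mono_on {1..} (\<lambda>n. f (n - 1))"
proof (rule strict_mono_onI)
  fix r s :: nat
  assume "r \<in> {1..}" "r < s"
  then show "f (r - 1) < f (s - 1)" using assms by (simp add: strict_mono_less)
qed

lemma stationary_shift: "stationary f \<Longrightarrow> stationary (\<lambda>n. f (n - 1))"
  unfolding stationary_def by (metis add_diff_cancel_right' diff_le_mono)

definition collatz_chain_start :: "nat \<Rightarrow> nat \<times> nat \<times> nat" where
  "collatz_chain_start k = (case odd_pow2_split k of (m, p) \<Rightarrow> (m, p, Suc p))"

(* A state (m, p, j) stands for the coefficient index (3m + 2) 2^p, where 3m + 2 = T^j(k);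
   it is a fixed point once 3m + 2 is a power of two. *)
definition collatz_chain_step :: "nat \<times> nat \<times> nat \<Rightarrow> nat \<times> nat \<times> nat" where
  "collatz_chain_step s = (case s of (m, p, j) \<Rightarrow>
     if 3 * m + 2 \<in> pow2_ge4 then s
     else case odd_pow2_split (3 * m + 2) of (m', v) \<Rightarrow> (m', p + v, j + Suc v))"

lemma collatz_chain_step_advance:
  assumes "m \<ge> 1" "3 * m + 2 \<notin> pow2_ge4"
  obtains m' v where "collatz_chain_step (m, p, j) = (m', p + v, j + Suc v)"
    and "m' \<ge> 1" and "(2 * m' + 1) * 2 ^ v = 3 * m + 2"
proof -
  obtain m' v where split: "odd_pow2_split (3 * m + 2) = (m', v)" by fastforce
  show ?thesis
  proof
    show "collatz_chain_step (m, p, j) = (m', p + v, j + Suc v)"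
      using assms(2) split by (simp add: collatz_chain_step_def)
    show "m' \<ge> 1" using odd_pow2_split_ge1[OF _ assms(2) split] assms(1) by simp
    show "(2 * m' + 1) * 2 ^ v = 3 * m + 2" using odd_pow2_split_eq[OF _ split] by simp
  qed
qed

locale collatz_chain =
  fixes k :: nat and m p j :: "nat \<Rightarrow> nat"
  assumes start: "(2 * m 0 + 1) * 2 ^ p 0 = k"
    and m_ge1: "m n \<ge> 1"
    and collatzT_j: "(collatzT ^^ j n) k = 3 * m n + 2"
    and trap: "3 * m n + 2 \<in> pow2_ge4 \<Longrightarrow>
      m (Suc n) = m n \<and> p (Suc n) = p n \<and> j (Suc n) = j n"
    and link: "3 * m n + 2 \<notin> pow2_ge4 \<Longrightarrow>
      (2 * m (Suc n) + 1) * 2 ^ p (Suc n) = (3 * m n + 2) * 2 ^ p n \<and> j n < j (Suc n)"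
begin

definition index :: "nat \<Rightarrow> nat" where
  "index n = (3 * m n + 2) * 2 ^ p n"

lemma j_less_Suc_iff: "j n < j (Suc n) \<longleftrightarrow> 3 * m n + 2 \<notin> pow2_ge4"
  using trap link by fastforce

lemma index_less_Suc:
  assumes "3 * m n + 2 \<notin> pow2_ge4"
  shows "index n < index (Suc n)"
proof -
  have "index n = (2 * m (Suc n) + 1) * 2 ^ p (Suc n)"
    using link[OF assms] by (simp add: index_def)
  also have "\<dots> < index (Suc n)" by (simp add: index_def)
  finally show ?thesis .
qed

lemma strict_mono_or_stationary:
  "(strict_mono j \<and> strict_mono index) \<or> (stationary j \<and> stationary index)"
  by (rule strict_mono_or_stationaryI[where P = "\<lambda>n. 3 * m n + 2 \<in> pow2_ge4"])
    (use j_less_Suc_iff index_less_Suc trap in \<open>auto simp: index_def\<close>)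

lemma telescope:
  fixes b :: "nat \<Rightarrow> 'a :: semiring_1"
  assumes rel: "\<And>m n. m \<ge> 1 \<Longrightarrow> \<alpha> * b ((3 * m + 2) * 2 ^ n) = b ((2 * m + 1) * 2 ^ n)"
    and pow2_zero: "\<And>n. b (2 ^ (n + 2)) = 0"
  shows "b k = \<alpha> ^ Suc n * b (index n)"
proof (induction n)
  case 0
  show ?case using rel[OF m_ge1, of 0 "p 0"] start by (simp add: index_def)
next
  case (Suc n)
  show ?case
  proof (cases "3 * m n + 2 \<in> pow2_ge4")
    case True
    then obtain i where "3 * m n + 2 = 2 ^ (i + 2)" by (auto simp: pow2_ge4_def le_iff_add)
    then have "index n = 2 ^ (i + p n + 2)" by (simp add: index_def power_add)
    then have "b (index n) = 0" by (simp only: pow2_zero)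
    moreover have "index (Suc n) = index n" using trap[OF True] by (simp add: index_def)
    ultimately show ?thesis using Suc by simp
  next
    case False
    then have "b (index n) = \<alpha> * b (index (Suc n))"
      using rel[OF m_ge1, of "Suc n" "p (Suc n)"] link by (simp add: index_def)
    then show ?thesis using Suc by (metis mult.assoc power_Suc2)
  qed
qed

end

lemma collatz_chain_exists:
  assumes "k \<ge> 3" "k \<notin> pow2_ge4"
  shows "\<exists>m p j. collatz_chain k m p j"
proof -
  define S where "S n = (collatz_chain_step ^^ n) (collatz_chain_start k)" for n
  define m where "m n = fst (S n)" for n
  define p where "p n = fst (snd (S n))" for n
  define j where "j n = snd (snd (S n))" for n
  have S_Suc: "(m (Suc n), p (Suc n), j (Suc n)) = collatz_chain_step (m n, p n, j n)" for n
    by (simp add: m_def p_def j_def S_def)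
  obtain m0 p0 where split: "odd_pow2_split k = (m0, p0)" by fastforce
  have S_0: "m 0 = m0" "p 0 = p0" "j 0 = Suc p0"
    using split by (simp_all add: m_def p_def j_def S_def collatz_chain_start_def)
  have k_eq: "k = (2 * m0 + 1) * 2 ^ p0" using odd_pow2_split_eq[OF _ split] assms(1) by simp
  have invariant: "m n \<ge> 1 \<and> (collatzT ^^ j n) k = 3 * m n + 2" for n
  proof (induction n)
    case 0
    have "(collatzT ^^ j 0) k = 3 * m 0 + 2"
      unfolding S_0 k_eq by (rule collatzT_funpow_odd_mult_pow2)
    then show ?case using odd_pow2_split_ge1[OF assms split] S_0 by simp
  next
    case (Suc n)
    show ?case
    proof (cases "3 * m n + 2 \<in> pow2_ge4")
      case True
      then show ?thesis using S_Suc[of n] Suc by (simp add: collatz_chain_step_def)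
    next
      case False
      then obtain m' v
        where step: "collatz_chain_step (m n, p n, j n) = (m', p n + v, j n + Suc v)"
        and "m' \<ge> 1" and odd: "(2 * m' + 1) * 2 ^ v = 3 * m n + 2"
        using collatz_chain_step_advance Suc by blast
      have "(collatzT ^^ (j n + Suc v)) k = (collatzT ^^ Suc v) ((collatzT ^^ j n) k)"
        by (simp only: add.commute[of "j n"] funpow_add comp_apply)
      also have "\<dots> = (collatzT ^^ Suc v) ((2 * m' + 1) * 2 ^ v)"
        unfolding odd using Suc by simp
      also have "\<dots> = 3 * m' + 2" by (rule collatzT_funpow_odd_mult_pow2)
      finally show ?thesis using S_Suc[of n] step \<open>m' \<ge> 1\<close> by simp
    qed
  qed
  have "collatz_chain k m p j"
  proof
    fix n
    show "m n \<ge> 1" "(collatzT ^^ j n) k = 3 * m n + 2" using invariant by simp_all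
    show "3 * m n + 2 \<in> pow2_ge4 \<Longrightarrow> m (Suc n) = m n \<and> p (Suc n) = p n \<and> j (Suc n) = j n"
      using S_Suc[of n] by (simp add: collatz_chain_step_def)
    assume "3 * m n + 2 \<notin> pow2_ge4"
    then obtain m' v
      where step: "collatz_chain_step (m n, p n, j n) = (m', p n + v, j n + Suc v)"
      and odd: "(2 * m' + 1) * 2 ^ v = 3 * m n + 2"
      using collatz_chain_step_advance invariant by blast
    have "(2 * m' + 1) * 2 ^ (p n + v) = ((2 * m' + 1) * 2 ^ v) * 2 ^ p n"
      by (simp add: power_add algebra_simps)
    also have "\<dots> = (3 * m n + 2) * 2 ^ p n" by (simp only: odd)
    finally show "(2 * m (Suc n) + 1) * 2 ^ p (Suc n) = (3 * m n + 2) * 2 ^ p n \<and> j n < j (Suc n)"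
      using S_Suc[of n] step by simp
  qed (use k_eq S_0 in simp)
  then show ?thesis by blast
qed

theorem lemma2p8:
  fixes \<omega> :: "nat \<Rightarrow> real" and \<mu> :: complex
    and f :: "complex \<Rightarrow> complex" and c :: "nat \<Rightarrow> complex"
  assumes \<omega>_pos: "\<forall>n\<ge>1. \<omega> n > 0"
    and \<mu>_nz: "\<mu> \<noteq> 0"
    and fX: "f \<in> X_omega \<omega>"
    and c_low: "\<forall>n<3. c n = 0"
    and f_series: "\<forall>z\<in>ball 0 1. (\<lambda>n. c n * z ^ n) sums f z"
    and rel: "\<forall>m\<ge>1. \<forall>n::nat.
        inverse \<mu> * c ((3 * m + 2) * 2 ^ n) / complex_of_real (\<omega> ((3 * m + 2) * 2 ^ n))
        = c ((2 * m + 1) * 2 ^ n) / complex_of_real (\<omega> ((2 * m + 1) * 2 ^ n))"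
    and pow0: "\<forall>n::nat. c (2 ^ (n + 2)) = 0"
  shows "\<forall>k::nat. k \<ge> 3 \<and> k \<notin> pow2_ge4 \<longrightarrow>
    (\<exists>m p j :: nat \<Rightarrow> nat.
       (\<forall>n\<ge>1. c k = (inverse \<mu> ^ n * complex_of_real (\<omega> ((2 * m 1 + 1) * 2 ^ p 1))
                       / complex_of_real (\<omega> ((3 * m n + 2) * 2 ^ p n)))
                     * c ((3 * m n + 2) * 2 ^ p n)) \<and>
       (\<forall>n\<ge>1. m n \<ge> 1) \<and>
       (\<forall>n\<ge>1. 3 * m n + 2 = (collatzT ^^ j n) k) \<and>
       (\<forall>n\<ge>1. j (n + 1) > j n \<longleftrightarrow> 3 * m n + 2 \<notin> pow2_ge4) \<and>
       ((strict_mono_on {1..} j \<and> strict_mono_on {1..} (\<lambda>n. (3 * m n + 2) * 2 ^ p n)) \<or>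
        (stationary j \<and> stationary (\<lambda>n. (3 * m n + 2) * 2 ^ p n))))"
proof (intro allI impI, goal_cases)
  case (1 k)
  then obtain m p j where "collatz_chain k m p j" using collatz_chain_exists by blast
  then interpret collatz_chain k m p j .
  have "\<omega> k > 0" using \<omega>_pos 1 by simp
  have coeff: "c k = (inverse \<mu> ^ Suc n * \<omega> k / \<omega> (index n)) * c (index n)" for n
  proof -
    have "c k / \<omega> k = inverse \<mu> ^ Suc n * (c (index n) / \<omega> (index n))"
      by (rule telescope) (use rel pow0 in auto)
    then show ?thesis using \<open>\<omega> k > 0\<close> by (simp add: field_simps)
  qed
  show ?case
  proof (rule exI[of _ "\<lambda>n. m (n - 1)"], rule exI[of _ "\<lambda>n. p (n - 1)"],
      rule exI[of _ "\<lambda>n. j (n - 1)"], intro conjI allI impI)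
    show "(strict_mono_on {1..} (\<lambda>n. j (n - 1))
          \<and> strict_mono_on {1..} (\<lambda>n. (3 * m (n - 1) + 2) * 2 ^ p (n - 1)))
        \<or> (stationary (\<lambda>n. j (n - 1)) \<and> stationary (\<lambda>n. (3 * m (n - 1) + 2) * 2 ^ p (n - 1)))"
      using strict_mono_or_stationary strict_mono_on_shift[of j] strict_mono_on_shift[of index]
        stationary_shift[of j] stationary_shift[of index]
      unfolding index_def by blast
  next
    fix n :: nat
    assume "n \<ge> 1"
    then have n: "n = Suc (n - 1)" by simp
    show "c k = (inverse \<mu> ^ n * \<omega> ((2 * m (1 - 1) + 1) * 2 ^ p (1 - 1))
        / \<omega> ((3 * m (n - 1) + 2) * 2 ^ p (n - 1))) * c ((3 * m (n - 1) + 2) * 2 ^ p (n - 1))"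
      using coeff[of "n - 1"] start n by (simp add: index_def)
    show "j (n + 1 - 1) > j (n - 1) \<longleftrightarrow> 3 * m (n - 1) + 2 \<notin> pow2_ge4"
      using j_less_Suc_iff[of "n - 1"] n by simp
  qed (use m_ge1 collatzT_j in simp_all)
qed

end
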